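(* Let $n_{xL},n_{yL},n_{xR},n_{yR}\ge 2$ and let $h_{xL},h_{xR}>0$. Assume: (i) $H_{xL}\in\mathbb{R}^{n_{xL}\times n_{xL}}$, $H_{yL}\in\mathbb{R}^{n_{yL}\times n_{yL}}$, $H_{xR}\in\mathbb{R}^{n_{xR}\times n_{xR}}$, $H_{yR}\in\mathbb{R}^{n_{yR}\times n_{yR}}$ are diagonal positive definite; (ii) $M_{xL}, M_{xR}$ are symmetric and can be written as $M_{xL}=\tilde M_{xL}+h_{xL}\alpha(E_{0L}S_{xL})^T(E_{0L}S_{xL})$, $M_{xR}=\tilde M_{xR}+h_{xR}\alpha(E_{0R}S_{xR})^T(E_{0R}S_{xR})$ with $\tilde M_{xL},\tilde M_{xR}$ symmetric positive semidefinite and a constant $\alpha>0$, where $S_{xL}\in\mathbb{R}^{n_{xL}\times n_{xL}}$, $S_{xR}\in\mathbb{R}^{n_{xR}\times n_{xR}}$ are arbitrary real matrices; (iii) $I_{F2C}\in\mathbb{R}^{n_{yL}\times n_{yR}}$, $I_{C2F}\in\mathbb{R}^{n_{yR}\times n_{yL}}$ satisfy $H_{yR}I_{C2F}=(H_{yL}I_{F2C})^T$ and both $H_{yL}(I_{yL}-I_{F2C}I_{C2F})$ and $H_{yR}(I_{yR}-I_{C2F}I_{F2C})$ are positive semidefinite; (iv) $\tau\ge\max\big(\frac{1}{2\alpha h_{xL}},\frac{1}{2\alpha h_{xR}}\big)$ (in particular, if $h_{xR}=h_{xL}/2$ this reads $\tau\ge \frac{1}{\alpha h_{xL}}$). Consider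 the semidiscrete system (boldface denotes Kronecker extension: $\mathbf{A}_{xL}=A_{xL}\otimes I_{yL}$, $\mathbf{A}_{xR}=A_{xR}\otimes I_{yR}$) $$\mathbf{u}_{tt}=\big(H_{xL}^{-1}(-M_{xL}+E_{0L}S_{xL})\otimes I_{yL}\big)\mathbf{u}+\tfrac12\mathbf{H}_{xL}^{-1}\mathbf{S}_{xL}^T\mathbf{w}_L-\tau\mathbf{H}_{xL}^{-1}\mathbf{w}_L-\tfrac12\mathbf{H}_{xL}^{-1}\big(\mathbf{E}_{0L}\mathbf{S}_{xL}\mathbf{u}-(E_{LR}\otimes I_{F2C})\mathbf{S}_{xR}\mathbf{v}\big),$$ $$\mathbf{v}_{tt}=\big(H_{xR}^{-1}(-M_{xR}-E_{0R}S_{xR})\otimes I_{yR}\big)\mathbf{v}-\tfrac12\mathbf{H}_{xR}^{-1}\mathbf{S}_{xR}^T\mathbf{w}_R-\tau\mathbf{H}_{xR}^{-1}\mathbf{w}_R+\tfrac12\mathbf{H}_{xR}^{-1}\big(\mathbf{E}_{0R}\mathbf{S}_{xR}\mathbf{v}-(E_{RL}\otimes I_{C2F})\mathbf{S}_{xL}\mathbf{u}\big),$$ where $\mathbf{w}_L=\mathbf{E}_{0L}\mathbf{u}-(E_{LR}\otimes I_{F2C})\mathbf{v}$ and $\mathbf{w}_R=\mathbf{E}_{0R}\mathbf{v}-(E_{RL}\otimes I_{C2F})\mathbf{u}$. Define $$\begin{aligned}E=&\ \mathbf{u}_t^T(H_{xL}\otimes H_{yL})\mathbf{u}_t+\mathbf{v}_t^T(H_{xR}\otimes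 H_{yR})\mathbf{v}_t\\&+\mathbf{u}^T(M_{xL}\otimes H_{yL})\mathbf{u}-\mathbf{u}^T(E_{0L}S_{xL}\otimes H_{yL})\mathbf{u}+\tau\mathbf{u}^T(E_{0L}\otimes H_{yL})\mathbf{u}\\&+\mathbf{v}^T(M_{xR}\otimes H_{yR})\mathbf{v}+\mathbf{v}^T(E_{0R}S_{xR}\otimes H_{yR})\mathbf{v}+\tau\mathbf{v}^T(E_{0R}\otimes H_{yR})\mathbf{v}\\&+\mathbf{u}^T(S_{xL}^TE_{LR}\otimes H_{yL}I_{F2C})\mathbf{v}-\mathbf{v}^T(S_{xR}^TE_{RL}\otimes H_{yR}I_{C2F})\mathbf{u}-2\tau\mathbf{u}^T(E_{LR}\otimes H_{yL}I_{F2C})\mathbf{v}.\end{aligned}$$ Then $E\ge 0$ for all $\mathbf{u},\mathbf{u}_t\in\mathbb{R}^{n_{xL}n_{yL}}$, $\mathbf{v},\mathbf{v}_t\in\mathbb{R}^{n_{xR}n_{yR}}$, and $\frac{d}{dt}E=0$ along every smooth solution of the system; hence $E$ is a conserved nonnegative discrete energy (an energy estimate holds).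
   Context: This is the summation-by-parts / simultaneous-approximation-term (SBP–SAT) discretization of the 2D wave equation $U_{tt}=U_{xx}+U_{yy}$ on two blocks (left block $n_{xL}\times n_{yL}$ grid, right block $n_{xR}\times n_{yR}$ grid) meeting at a vertical interface (right edge of the left block, left edge of the right block); only $x$-direction terms and interface coupling terms are retained (outer boundary terms and $y$-derivative terms are omitted). Grid vectors use the $x$-index as the outer Kronecker index. $E_{0L}\in\mathbb{R}^{n_{xL}\times n_{xL}}$ has a single nonzero entry $1$ at $(n_{xL},n_{xL})$; $E_{0R}\in\mathbb{R}^{n_{xR}\times n_{xR}}$ has a single nonzero entry $1$ at $(1,1)$; $E_{LR}\in\mathbb{R}^{n_{xL}\times n_{xR}}$ has a single nonzero entry $1$ at $(n_{xL},1)$; $E_{RL}=E_{LR}^T$. $I_{xL},I_{yL},I_{xR},I_{yR}$ are identity matrices of the indicated sizes. In the SBP setting $H_{x}$ is the SBP norm, $D_2=H_x^{-1}(-M+BS)$ is the second-derivative SBP operator with $S$ approximating the first derivative at the boundary, $\tau$ is the interface penalty parameter, and $I_{F2C},I_{C2F}$ are interface interpolation operators between the coarse (left) and fine (right) interface grids; hypothesis (ii) is the so-called borrowing property of $M$. *)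

theory Defs
  imports Complex_Main "Jordan_Normal_Form.Matrix"
begin

(* Kronecker product; row index i = i1 * dim_row B + i2 (first factor = outer index) *)
definition kron :: "real mat \<Rightarrow> real mat \<Rightarrow> real mat" where
  "kron A B = mat (dim_row A * dim_row B) (dim_col A * dim_col B)
     (\<lambda>(i,j). A $$ (i div dim_row B, j div dim_col B) * B $$ (i mod dim_row B, j mod dim_col B))"

definition symmetric_mat :: "real mat \<Rightarrow> bool" where
  "symmetric_mat A \<longleftrightarrow> A\<^sup>T = A"

definition psd_mat :: "nat \<Rightarrow> real mat \<Rightarrow> bool" where
  "psd_mat n A \<longleftrightarrow> A \<in> carrier_mat n n \<and> (\<forall>x \<in> carrier_vec n. x \<bullet> (A *\<^sub>v x) \<ge> 0)"

definition pd_mat :: "nat \<Rightarrow> real mat \<Rightarrow> bool" where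
  "pd_mat n A \<longleftrightarrow> A \<in> carrier_mat n n \<and> (\<forall>x \<in> carrier_vec n. x \<noteq> 0\<^sub>v n \<longrightarrow> x \<bullet> (A *\<^sub>v x) > 0)"

(* single-entry matrices (0-based indices): paper's E_0L (entry (n,n)), E_0R (entry (1,1)), E_LR (entry (nL,1)) *)
definition E0L :: "nat \<Rightarrow> real mat" where
  "E0L n = mat n n (\<lambda>(i,j). if i = n - 1 \<and> j = n - 1 then 1 else 0)"

definition E0R :: "nat \<Rightarrow> real mat" where
  "E0R n = mat n n (\<lambda>(i,j). if i = 0 \<and> j = 0 then 1 else 0)"

definition ELR :: "nat \<Rightarrow> nat \<Rightarrow> real mat" where
  "ELR nL nR = mat nL nR (\<lambda>(i,j). if i = nL - 1 \<and> j = 0 then 1 else 0)"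

definition ERL :: "nat \<Rightarrow> nat \<Rightarrow> real mat" where
  "ERL nL nR = (ELR nL nR)\<^sup>T"

end

theory Submission
  imports Defs
begin

text \<open>Because every \<open>E\<close>-matrix has a single nonzero entry, all boundary and interface terms of the
  energy are rank one in the \<open>x\<close>-direction: they only see the interface traces \<open>p, q\<close> of \<open>u, v\<close> and
  their boundary derivatives \<open>d = (\<delta>\<^sub>n\<^sup>T S \<otimes> I) u\<close>, \<open>e\<close>. By the borrowing property the energy is the sum of
  the kinetic terms, the interior terms \<open>u\<^sup>T (MtL \<otimes> HyL) u\<close>, \<open>v\<^sup>T (MtR \<otimes> HyR) v\<close> (nonnegative, as a Kronecker
  product of a positive semidefinite and a nonnegative diagonal matrix is positive semidefinite) and a
  quadratic form in \<open>p, d, q, e\<close>. Completing the square in \<open>d\<close> against the jump \<open>w\<^sub>L = p - I\<^sub>F\<^sub>2\<^sub>C q\<close>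
  (and in \<open>e\<close> against \<open>w\<^sub>R = q - I\<^sub>C\<^sub>2\<^sub>F p\<close>) leaves, for \<open>\<tau> \<ge> 1/(2\<alpha>h)\<close>, only \<open>\<tau>/2\<close> times the two
  quadratic forms of hypothesis (iii), which are nonnegative.

  For conservation, substituting the equations of motion into \<open>dE/dt\<close> and using
  \<open>H\<^sub>x H\<^sub>x\<^sup>-\<^sup>1 = I\<close> with the mixed-product rule of \<open>\<otimes>\<close> turns every term into a bilinear form in
  \<open>u, u\<^sub>t, v, v\<^sub>t\<close>; the adjointness \<open>H\<^sub>y\<^sub>R I\<^sub>C\<^sub>2\<^sub>F = (H\<^sub>y\<^sub>L I\<^sub>F\<^sub>2\<^sub>C)\<^sup>T\<close> makes all of them cancel in pairs.\<close>

section \<open>Kronecker products\<close>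

lemma sum_lessThan_mult:
  "(\<Sum>r<n * m. f r) = (\<Sum>i<n. \<Sum>j<m. f (i * m + j :: nat) :: 'a::comm_monoid_add)"
  by (simp add: sum.nat_group[symmetric] sum.atLeastLessThan_shift_0 atLeast0LessThan add.commute)

lemma mult_add_less_mult: "i < n \<Longrightarrow> j < m \<Longrightarrow> i * m + j < n * (m::nat)"
proof -
  assume "i < n" "j < m"
  then have "(i + 1) * m \<le> n * m" by (intro mult_le_mono1) simp
  with \<open>j < m\<close> show ?thesis by simp
qed

lemma div_mod_less_mult: "i < n * (m::nat) \<Longrightarrow> i div m < n \<and> i mod m < m"
  by (metis less_mult_imp_div_less mod_less_divisor mult_0_right not_gr0 not_less0)

lemma dim_kron [simp]:
  "dim_row (kron A B) = dim_row A * dim_row B"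
  "dim_col (kron A B) = dim_col A * dim_col B"
  by (simp_all add: kron_def)

lemma kron_carrier_mat:
  "A \<in> carrier_mat a b \<Longrightarrow> B \<in> carrier_mat c d \<Longrightarrow> kron A B \<in> carrier_mat (a * c) (b * d)"
  by auto

lemma index_kron:
  "i < dim_row A * dim_row B \<Longrightarrow> j < dim_col A * dim_col B \<Longrightarrow>
   kron A B $$ (i, j) = A $$ (i div dim_row B, j div dim_col B) * B $$ (i mod dim_row B, j mod dim_col B)"
  by (simp add: kron_def)

lemma index_kron_block:
  "i < dim_row A \<Longrightarrow> j < dim_row B \<Longrightarrow> k < dim_col A \<Longrightarrow> l < dim_col B \<Longrightarrow>
   kron A B $$ (i * dim_row B + j, k * dim_col B + l) = A $$ (i, k) * B $$ (j, l)"
  by (simp add: index_kron mult_add_less_mult)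

lemma transpose_kron: "(kron A B)\<^sup>T = kron A\<^sup>T B\<^sup>T"
proof (rule eq_matI)
  fix i j assume "i < dim_row (kron A\<^sup>T B\<^sup>T)" "j < dim_col (kron A\<^sup>T B\<^sup>T)"
  then have i: "i < dim_col A * dim_col B" and j: "j < dim_row A * dim_row B" by simp_all
  show "(kron A B)\<^sup>T $$ (i, j) = kron A\<^sup>T B\<^sup>T $$ (i, j)"
    using i j div_mod_less_mult[OF i] div_mod_less_mult[OF j] by (simp add: index_kron)
qed simp_all

lemma kron_mult:
  assumes "dim_col A = dim_row C" "dim_col B = dim_row D"
  shows "kron A B * kron C D = kron (A * C) (B * D)"
proof (rule eq_matI)
  fix i j assume "i < dim_row (kron (A * C) (B * D))" "j < dim_col (kron (A * C) (B * D))"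
  then have i: "i < dim_row A * dim_row B" and j: "j < dim_col C * dim_col D" by simp_all
  define p q where "p = dim_col A" and "q = dim_col B"
  have "(kron A B * kron C D) $$ (i, j) = (\<Sum>r<p * q. kron A B $$ (i, r) * kron C D $$ (r, j))"
    using i j assms by (auto simp: scalar_prod_def p_def q_def atLeast0LessThan intro!: sum.cong)
  also have "\<dots> = (\<Sum>k<p. \<Sum>l<q. (A $$ (i div dim_row B, k) * C $$ (k, j div dim_col D)) *
                 (B $$ (i mod dim_row B, l) * D $$ (l, j mod dim_col D)))"
    unfolding sum_lessThan_mult
    by (intro sum.cong refl) (use i j assms in \<open>simp add: index_kron mult_add_less_mult p_def q_def\<close>)
  also have "\<dots> = (\<Sum>k<p. A $$ (i div dim_row B, k) * C $$ (k, j div dim_col D)) *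
                  (\<Sum>l<q. B $$ (i mod dim_row B, l) * D $$ (l, j mod dim_col D))"
    by (simp add: sum_product)
  also have "\<dots> = kron (A * C) (B * D) $$ (i, j)"
    using i j div_mod_less_mult[OF i] div_mod_less_mult[OF j] assms
    by (simp add: index_kron scalar_prod_def p_def q_def atLeast0LessThan)
  finally show "(kron A B * kron C D) $$ (i, j) = kron (A * C) (B * D) $$ (i, j)" .
qed simp_all

lemma kron_mult_vec_assoc:
  assumes "dim_col A = dim_row C" "dim_col B = dim_row D" "dim_vec z = dim_col C * dim_col D"
  shows "kron A B *\<^sub>v (kron C D *\<^sub>v z) = kron (A * C) (B * D) *\<^sub>v z"
proof -
  have "kron A B *\<^sub>v (kron C D *\<^sub>v z) = (kron A B * kron C D) *\<^sub>v z"
    using assms by (intro assoc_mult_mat_vec[symmetric]) (auto intro: carrier_vecI)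
  then show ?thesis using assms by (simp add: kron_mult)
qed

lemma scalar_prod_mult_mat_vec_sum:
  assumes "dim_vec x = dim_row A" "dim_vec y = dim_col A"
  shows "x \<bullet> (A *\<^sub>v y) = (\<Sum>i<dim_row A. \<Sum>k<dim_col A. x $ i * A $$ (i, k) * y $ k)"
  using assms
  by (simp add: scalar_prod_def atLeast0LessThan mult_mat_vec_def row_def sum_distrib_left mult_ac)

lemma scalar_prod_mult_vec_transpose:
  fixes A :: "real mat"
  assumes "A \<in> carrier_mat n m" "x \<in> carrier_vec n" "y \<in> carrier_vec m"
  shows "x \<bullet> (A *\<^sub>v y) = y \<bullet> (A\<^sup>T *\<^sub>v x)"
  using assms by (simp add: transpose_vec_mult_scalar comm_scalar_prod[of y m])

lemma scalar_prod_kron_mult_vec: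
  assumes "dim_vec x = dim_row X * dim_row Y" "dim_vec z = dim_col X * dim_col Y"
  shows "x \<bullet> (kron X Y *\<^sub>v z) = (\<Sum>i<dim_row X. \<Sum>k<dim_col X. X $$ (i, k) *
     (\<Sum>j<dim_row Y. \<Sum>l<dim_col Y. x $ (i * dim_row Y + j) * Y $$ (j, l) * z $ (k * dim_col Y + l)))"
proof -
  have "x \<bullet> (kron X Y *\<^sub>v z) = (\<Sum>i<dim_row X. \<Sum>j<dim_row Y. \<Sum>k<dim_col X. \<Sum>l<dim_col Y.
      X $$ (i, k) * (x $ (i * dim_row Y + j) * Y $$ (j, l) * z $ (k * dim_col Y + l)))"
    using assms unfolding scalar_prod_mult_mat_vec_sum[OF assms[unfolded dim_kron[symmetric]]]
    by (simp add: sum_lessThan_mult index_kron_block sum_distrib_left mult_ac)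
  also have "\<dots> = (\<Sum>i<dim_row X. \<Sum>k<dim_col X. \<Sum>j<dim_row Y. \<Sum>l<dim_col Y.
      X $$ (i, k) * (x $ (i * dim_row Y + j) * Y $$ (j, l) * z $ (k * dim_col Y + l)))"
    by (rule sum.cong[OF refl], rule sum.swap)
  finally show ?thesis by (simp add: sum_distrib_left)
qed

lemma scalar_prod_kron_swap:
  assumes "dim_vec x = dim_row X * dim_row Y" "dim_vec z = dim_col X * dim_col Y"
  shows "x \<bullet> (kron X Y *\<^sub>v z) = z \<bullet> (kron X\<^sup>T Y\<^sup>T *\<^sub>v x)"
proof -
  have "kron X Y \<in> carrier_mat (dim_row X * dim_row Y) (dim_col X * dim_col Y)" by auto
  moreover have "x \<in> carrier_vec (dim_row X * dim_row Y)" "z \<in> carrier_vec (dim_col X * dim_col Y)"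
    using assms by (auto intro: carrier_vecI)
  ultimately show ?thesis by (simp add: scalar_prod_mult_vec_transpose transpose_kron)
qed

text \<open>Reading \<open>x \<in> \<real>\<^bsup>n\<cdot>m\<^esup>\<close> as an \<open>n \<times> m\<close> array (outer index first), \<open>contract_outer n m a x\<close>
  is \<open>(a\<^sup>T \<otimes> I\<^sub>m) x\<close>.\<close>

definition contract_outer :: "nat \<Rightarrow> nat \<Rightarrow> (nat \<Rightarrow> real) \<Rightarrow> real vec \<Rightarrow> real vec" where
  "contract_outer n m a x = vec m (\<lambda>j. \<Sum>i<n. a i * x $ (i * m + j))"

lemma contract_outer_carrier_vec [simp]: "contract_outer n m a x \<in> carrier_vec m"
  by (simp add: contract_outer_def)

lemma scalar_prod_kron_rank_one:
  assumes XY: "X \<in> carrier_mat n n'" "Y \<in> carrier_mat m m'"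
    and xz: "x \<in> carrier_vec (n * m)" "z \<in> carrier_vec (n' * m')"
    and X: "\<And>i k. i < n \<Longrightarrow> k < n' \<Longrightarrow> X $$ (i, k) = a i * b k"
  shows "x \<bullet> (kron X Y *\<^sub>v z) = contract_outer n m a x \<bullet> (Y *\<^sub>v contract_outer n' m' b z)"
proof -
  let ?f = "\<lambda>i k j l. a i * x $ (i * m + j) * Y $$ (j, l) * (b k * z $ (k * m' + l))"
  have "x \<bullet> (kron X Y *\<^sub>v z) = (\<Sum>i<n. \<Sum>k<n'. \<Sum>j<m. \<Sum>l<m'. ?f i k j l)"
    using XY xz by (simp add: scalar_prod_kron_mult_vec X sum_distrib_left mult_ac)
  also have "\<dots> = (\<Sum>i<n. \<Sum>j<m. \<Sum>k<n'. \<Sum>l<m'. ?f i k j l)"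
    by (rule sum.cong[OF refl], rule sum.swap)
  also have "\<dots> = (\<Sum>j<m. \<Sum>i<n. \<Sum>l<m'. \<Sum>k<n'. ?f i k j l)"
    by (subst sum.swap) (intro sum.cong refl sum.swap)
  also have "\<dots> = (\<Sum>j<m. \<Sum>l<m'. \<Sum>i<n. \<Sum>k<n'. ?f i k j l)"
    by (rule sum.cong[OF refl], rule sum.swap)
  also have "\<dots> = contract_outer n m a x \<bullet> (Y *\<^sub>v contract_outer n' m' b z)"
    using XY by (simp add: scalar_prod_mult_mat_vec_sum contract_outer_def sum_distrib_left sum_distrib_right mult_ac)
  finally show ?thesis .
qed

lemma scalar_prod_kron_linear_left:
  assumes x: "dim_vec x = n * dim_row Y" and z: "dim_vec z = n' * dim_col Y"
    and "X \<in> carrier_mat n n'" "X1 \<in> carrier_mat n n'" "X2 \<in> carrier_mat n n'"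
    and X: "\<And>i k. i < n \<Longrightarrow> k < n' \<Longrightarrow> X $$ (i, k) = a * X1 $$ (i, k) + b * X2 $$ (i, k)"
  shows "x \<bullet> (kron X Y *\<^sub>v z) = a * (x \<bullet> (kron X1 Y *\<^sub>v z)) + b * (x \<bullet> (kron X2 Y *\<^sub>v z))"
proof -
  define G where "G i k = (\<Sum>j<dim_row Y. \<Sum>l<dim_col Y.
    x $ (i * dim_row Y + j) * Y $$ (j, l) * z $ (k * dim_col Y + l))" for i k
  have form: "x \<bullet> (kron W Y *\<^sub>v z) = (\<Sum>i<n. \<Sum>k<n'. W $$ (i, k) * G i k)"
    if "W \<in> carrier_mat n n'" for W
    using scalar_prod_kron_mult_vec[of x W Y z] x z that by (simp add: G_def)
  have "(\<Sum>i<n. \<Sum>k<n'. X $$ (i, k) * G i k) =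
      (\<Sum>i<n. \<Sum>k<n'. a * (X1 $$ (i, k) * G i k) + b * (X2 $$ (i, k) * G i k))"
    by (intro sum.cong refl) (simp add: X algebra_simps)
  then show ?thesis
    using assms(3-5) by (simp add: form sum.distrib sum_distrib_left)
qed

section \<open>Positive semidefinite forms\<close>

lemma pd_mat_imp_psd_mat: "pd_mat n A \<Longrightarrow> psd_mat n A"
  unfolding pd_mat_def psd_mat_def
proof (intro conjI ballI; elim conjE)
  fix x :: "real vec"
  assume A: "A \<in> carrier_mat n n" and pos: "\<forall>x\<in>carrier_vec n. x \<noteq> 0\<^sub>v n \<longrightarrow> 0 < x \<bullet> (A *\<^sub>v x)"
    and x: "x \<in> carrier_vec n"
  show "0 \<le> x \<bullet> (A *\<^sub>v x)"
  proof (cases "x = 0\<^sub>v n")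
    case True
    then show ?thesis using A by simp
  next
    case False
    then show ?thesis using pos x by (simp add: less_imp_le)
  qed
qed

lemma psd_mat_diag_nonneg:
  assumes "psd_mat n A" "j < n"
  shows "A $$ (j, j) \<ge> 0"
proof -
  have "A \<in> carrier_mat n n" using assms by (simp add: psd_mat_def)
  then have "A $$ (j, j) = unit_vec n j \<bullet> (A *\<^sub>v unit_vec n j)"
    using assms(2) by simp
  also have "\<dots> \<ge> 0" using assms by (simp add: psd_mat_def)
  finally show ?thesis .
qed

lemma diagonal_mat_transpose: "diagonal_mat A \<Longrightarrow> A \<in> carrier_mat n n \<Longrightarrow> A\<^sup>T = A"
  by (rule eq_matI) (auto simp: diagonal_mat_def, metis)

lemma psd_mat_kron_diagonal:
  assumes A: "psd_mat n A" and B: "psd_mat m B" "diagonal_mat B"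
  shows "psd_mat (n * m) (kron A B)"
  unfolding psd_mat_def
proof (intro conjI ballI)
  have Ac: "A \<in> carrier_mat n n" and Bc: "B \<in> carrier_mat m m" using A B by (simp_all add: psd_mat_def)
  then show "kron A B \<in> carrier_mat (n * m) (n * m)" by (rule kron_carrier_mat)
  fix x :: "real vec" assume x: "x \<in> carrier_vec (n * m)"
  define c where "c j = vec n (\<lambda>i. x $ (i * m + j))" for j
  have off_diag: "B $$ (j, l) = 0" if "j < m" "l < m" "l \<noteq> j" for j l
    using B(2) Bc that unfolding diagonal_mat_def by auto
  have row: "(\<Sum>l<m. x $ (i * m + j) * B $$ (j, l) * x $ (k * m + l)) =
      x $ (i * m + j) * B $$ (j, j) * x $ (k * m + j)" if "j < m" for i j k
  proof -
    have "(\<Sum>l<m. x $ (i * m + j) * B $$ (j, l) * x $ (k * m + l)) =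
        (\<Sum>l<m. if l = j then x $ (i * m + j) * B $$ (j, j) * x $ (k * m + j) else 0)"
      using that by (intro sum.cong refl) (auto simp: off_diag)
    then show ?thesis using that by simp
  qed
  have "x \<bullet> (kron A B *\<^sub>v x) =
      (\<Sum>i<n. \<Sum>k<n. A $$ (i, k) * (\<Sum>j<m. x $ (i * m + j) * B $$ (j, j) * x $ (k * m + j)))"
    using Ac Bc x by (simp add: scalar_prod_kron_mult_vec row)
  also have "\<dots> = (\<Sum>i<n. \<Sum>k<n. \<Sum>j<m. B $$ (j, j) * (x $ (i * m + j) * A $$ (i, k) * x $ (k * m + j)))"
    by (simp add: sum_distrib_left mult_ac)
  also have "\<dots> = (\<Sum>i<n. \<Sum>j<m. \<Sum>k<n. B $$ (j, j) * (x $ (i * m + j) * A $$ (i, k) * x $ (k * m + j)))"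
    by (rule sum.cong[OF refl], rule sum.swap)
  also have "\<dots> = (\<Sum>j<m. \<Sum>i<n. \<Sum>k<n. B $$ (j, j) * (x $ (i * m + j) * A $$ (i, k) * x $ (k * m + j)))"
    by (rule sum.swap)
  also have "\<dots> = (\<Sum>j<m. B $$ (j, j) * (c j \<bullet> (A *\<^sub>v c j)))"
    using Ac by (simp add: scalar_prod_mult_mat_vec_sum c_def sum_distrib_left)
  also have "\<dots> \<ge> 0"
    using A psd_mat_diag_nonneg[OF B(1)] by (intro sum_nonneg mult_nonneg_nonneg) (auto simp: psd_mat_def c_def)
  finally show "x \<bullet> (kron A B *\<^sub>v x) \<ge> 0" .
qed

lemma quadratic_form_diff:
  fixes H :: "real mat"
  assumes H: "H \<in> carrier_mat m m" "H\<^sup>T = H" and xy: "x \<in> carrier_vec m" "y \<in> carrier_vec m"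
  shows "(x - y) \<bullet> (H *\<^sub>v (x - y)) = x \<bullet> (H *\<^sub>v x) - 2 * (x \<bullet> (H *\<^sub>v y)) + y \<bullet> (H *\<^sub>v y)"
proof -
  have "y \<bullet> (H *\<^sub>v x) = x \<bullet> (H *\<^sub>v y)"
    using scalar_prod_mult_vec_transpose[OF H(1) xy(2,1)] H(2) by simp
  then show ?thesis
    using H xy by (simp add: mult_minus_distrib_mat_vec[of _ m m] scalar_prod_minus_distrib[of _ m]
        minus_scalar_prod_distrib[of _ m])
qed

lemma quadratic_form_completed_square:
  fixes H :: "real mat"
  assumes H: "psd_mat m H" "H\<^sup>T = H" and xw: "x \<in> carrier_vec m" "w \<in> carrier_vec m" and "a > 0"
  shows "a * (x \<bullet> (H *\<^sub>v x)) - s * (x \<bullet> (H *\<^sub>v w)) + s\<^sup>2 / (4 * a) * (w \<bullet> (H *\<^sub>v w)) \<ge> 0"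
proof -
  define c where "c = s / (2 * a)"
  have Hc: "H \<in> carrier_mat m m" using H(1) by (simp add: psd_mat_def)
  have "0 \<le> a * ((x - c \<cdot>\<^sub>v w) \<bullet> (H *\<^sub>v (x - c \<cdot>\<^sub>v w)))"
    using H(1) xw \<open>a > 0\<close> by (simp add: psd_mat_def)
  also have "(x - c \<cdot>\<^sub>v w) \<bullet> (H *\<^sub>v (x - c \<cdot>\<^sub>v w)) =
      x \<bullet> (H *\<^sub>v x) - 2 * c * (x \<bullet> (H *\<^sub>v w)) + c\<^sup>2 * (w \<bullet> (H *\<^sub>v w))"
    using Hc H(2) xw by (simp add: quadratic_form_diff mult_mat_vec[of _ m m] power2_eq_square)
  also have "a * (x \<bullet> (H *\<^sub>v x) - 2 * c * (x \<bullet> (H *\<^sub>v w)) + c\<^sup>2 * (w \<bullet> (H *\<^sub>v w))) =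
      a * (x \<bullet> (H *\<^sub>v x)) - s * (x \<bullet> (H *\<^sub>v w)) + s\<^sup>2 / (4 * a) * (w \<bullet> (H *\<^sub>v w))"
    using \<open>a > 0\<close> by (simp add: c_def field_simps power2_eq_square)
  finally show ?thesis .
qed

lemma quadratic_form_mult_one_minus:
  fixes H B :: "real mat"
  assumes "psd_mat m (H * (1\<^sub>m m - B))" "H \<in> carrier_mat m m" "B \<in> carrier_mat m m" "x \<in> carrier_vec m"
  shows "x \<bullet> ((H * B) *\<^sub>v x) \<le> x \<bullet> (H *\<^sub>v x)"
proof -
  have "H * (1\<^sub>m m - B) = H - H * B"
    using assms(2,3) by (simp add: mult_minus_distrib_mat[OF assms(2) one_carrier_mat assms(3)])
  then have "x \<bullet> ((H * (1\<^sub>m m - B)) *\<^sub>v x) = x \<bullet> (H *\<^sub>v x) - x \<bullet> ((H * B) *\<^sub>v x)"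
    using assms(2-4) by (simp add: minus_mult_distrib_mat_vec[of _ m m] scalar_prod_minus_distrib[of _ m])
  moreover have "x \<bullet> ((H * (1\<^sub>m m - B)) *\<^sub>v x) \<ge> 0"
    using assms(1,4) by (simp add: psd_mat_def)
  ultimately show ?thesis by simp
qed

section \<open>The interface estimate\<close>

text \<open>Completing the square in \<open>d\<close> against the jump \<open>w = p - F q\<close>.\<close>

lemma interface_half_form_nonneg:
  fixes HL HR F C :: "real mat"
  assumes HL: "psd_mat mL HL" "HL\<^sup>T = HL"
    and FC: "F \<in> carrier_mat mL mR" "C \<in> carrier_mat mR mL" "HR \<in> carrier_mat mR mR"
      "HR * C = (HL * F)\<^sup>T"
    and vecs: "p \<in> carrier_vec mL" "d \<in> carrier_vec mL" "q \<in> carrier_vec mR"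
    and a: "a > 0" "\<tau> \<ge> 1 / (2 * a)" and s: "s\<^sup>2 = 1"
  shows "a * (d \<bullet> (HL *\<^sub>v d)) - s * (p \<bullet> (HL *\<^sub>v d) - d \<bullet> ((HL * F) *\<^sub>v q))
      + \<tau> / 2 * (p \<bullet> (HL *\<^sub>v p) - 2 * (p \<bullet> ((HL * F) *\<^sub>v q)) + q \<bullet> ((HR * C * F) *\<^sub>v q)) \<ge> 0"
proof -
  have HLc: "HL \<in> carrier_mat mL mL" using HL(1) by (simp add: psd_mat_def)
  define w where "w = p - F *\<^sub>v q"
  have Fq: "F *\<^sub>v q \<in> carrier_vec mL" using FC(1) vecs(3) by simp
  have w: "w \<in> carrier_vec mL" using Fq vecs(1) by (simp add: w_def)
  have HLF: "HL *\<^sub>v (F *\<^sub>v q) = (HL * F) *\<^sub>v q"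
    using HLc FC(1) vecs(3) by (simp add: assoc_mult_mat_vec)
  have dw: "d \<bullet> (HL *\<^sub>v w) = p \<bullet> (HL *\<^sub>v d) - d \<bullet> ((HL * F) *\<^sub>v q)"
  proof -
    have "d \<bullet> (HL *\<^sub>v w) = d \<bullet> (HL *\<^sub>v p) - d \<bullet> (HL *\<^sub>v (F *\<^sub>v q))"
      using HLc vecs Fq by (simp add: w_def mult_minus_distrib_mat_vec[of _ mL mL] scalar_prod_minus_distrib[of _ mL])
    then show ?thesis
      using scalar_prod_mult_vec_transpose[OF HLc vecs(2,1)] HL(2) by (simp add: HLF)
  qed
  have ww: "w \<bullet> (HL *\<^sub>v w) = p \<bullet> (HL *\<^sub>v p) - 2 * (p \<bullet> ((HL * F) *\<^sub>v q)) + q \<bullet> ((HR * C * F) *\<^sub>v q)"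
  proof -
    have "(F *\<^sub>v q) \<bullet> (HL *\<^sub>v (F *\<^sub>v q)) = q \<bullet> ((HL * F)\<^sup>T *\<^sub>v (F *\<^sub>v q))"
      using scalar_prod_mult_vec_transpose[OF mult_carrier_mat[OF HLc FC(1)] Fq vecs(3)] by (simp only: HLF)
    also have "\<dots> = q \<bullet> ((HR * C * F) *\<^sub>v q)"
      unfolding FC(4)[symmetric]
      by (rule arg_cong[OF assoc_mult_mat_vec[symmetric, OF mult_carrier_mat[OF FC(3,2)] FC(1) vecs(3)]])
    finally show ?thesis
      using quadratic_form_diff[OF HLc HL(2) vecs(1) Fq] by (simp add: w_def HLF)
  qed
  have square: "a * (d \<bullet> (HL *\<^sub>v d)) - s * (d \<bullet> (HL *\<^sub>v w)) + s\<^sup>2 / (4 * a) * (w \<bullet> (HL *\<^sub>v w)) \<ge> 0"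
    by (rule quadratic_form_completed_square[OF HL vecs(2) w a(1)])
  have "s\<^sup>2 / (4 * a) * (w \<bullet> (HL *\<^sub>v w)) \<le> \<tau> / 2 * (w \<bullet> (HL *\<^sub>v w))"
  proof (rule mult_right_mono)
    show "s\<^sup>2 / (4 * a) \<le> \<tau> / 2" using a s by (simp add: field_simps)
    show "w \<bullet> (HL *\<^sub>v w) \<ge> 0" using HL(1) w by (simp add: psd_mat_def)
  qed
  with square show ?thesis unfolding dw ww by linarith
qed

text \<open>\<open>p, q\<close> stand for the interface traces of the two blocks and \<open>d, e\<close> for their boundary
  derivatives; \<open>F, C\<close> are the interpolation operators and \<open>HL, HR\<close> the interface norms.\<close>

definition interface_form ::
  "real mat \<Rightarrow> real mat \<Rightarrow> real mat \<Rightarrow> real mat \<Rightarrow> real \<Rightarrow> real \<Rightarrow> real \<Rightarrow>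
   real vec \<Rightarrow> real vec \<Rightarrow> real vec \<Rightarrow> real vec \<Rightarrow> real" where
  "interface_form HL HR F C aL aR \<tau> p d q e =
      aL * (d \<bullet> (HL *\<^sub>v d)) - p \<bullet> (HL *\<^sub>v d) + \<tau> * (p \<bullet> (HL *\<^sub>v p))
    + aR * (e \<bullet> (HR *\<^sub>v e)) + q \<bullet> (HR *\<^sub>v e) + \<tau> * (q \<bullet> (HR *\<^sub>v q))
    + d \<bullet> ((HL * F) *\<^sub>v q) - e \<bullet> ((HR * C) *\<^sub>v p) - 2 * \<tau> * (p \<bullet> ((HL * F) *\<^sub>v q))"

lemma interface_form_nonneg:
  fixes HL HR F C :: "real mat"
  assumes HL: "psd_mat mL HL" "HL\<^sup>T = HL" and HR: "psd_mat mR HR" "HR\<^sup>T = HR"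
    and FC: "F \<in> carrier_mat mL mR" "C \<in> carrier_mat mR mL" "HR * C = (HL * F)\<^sup>T"
      "psd_mat mL (HL * (1\<^sub>m mL - F * C))" "psd_mat mR (HR * (1\<^sub>m mR - C * F))"
    and vecs: "p \<in> carrier_vec mL" "d \<in> carrier_vec mL" "q \<in> carrier_vec mR" "e \<in> carrier_vec mR"
    and a: "aL > 0" "aR > 0" and tau: "\<tau> \<ge> 1 / (2 * aL)" "\<tau> \<ge> 1 / (2 * aR)"
  shows "interface_form HL HR F C aL aR \<tau> p d q e \<ge> 0"
proof -
  have HLc: "HL \<in> carrier_mat mL mL" and HRc: "HR \<in> carrier_mat mR mR"
    using HL(1) HR(1) by (simp_all add: psd_mat_def)
  have FC': "HL * F = (HR * C)\<^sup>T" by (simp add: FC(3))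
  have left: "aL * (d \<bullet> (HL *\<^sub>v d)) - 1 * (p \<bullet> (HL *\<^sub>v d) - d \<bullet> ((HL * F) *\<^sub>v q))
      + \<tau> / 2 * (p \<bullet> (HL *\<^sub>v p) - 2 * (p \<bullet> ((HL * F) *\<^sub>v q)) + q \<bullet> ((HR * C * F) *\<^sub>v q)) \<ge> 0"
    by (rule interface_half_form_nonneg[OF HL FC(1,2) HRc FC(3) vecs(1-3) a(1) tau(1)]) simp
  have right: "aR * (e \<bullet> (HR *\<^sub>v e)) - (-1) * (q \<bullet> (HR *\<^sub>v e) - e \<bullet> ((HR * C) *\<^sub>v p))
      + \<tau> / 2 * (q \<bullet> (HR *\<^sub>v q) - 2 * (q \<bullet> ((HR * C) *\<^sub>v p)) + p \<bullet> ((HL * F * C) *\<^sub>v p)) \<ge> 0"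
    by (rule interface_half_form_nonneg[OF HR FC(2,1) HLc FC' vecs(3,4,1) a(2) tau(2)]) simp
  have cross: "q \<bullet> ((HR * C) *\<^sub>v p) = p \<bullet> ((HL * F) *\<^sub>v q)"
    using scalar_prod_mult_vec_transpose[OF mult_carrier_mat[OF HRc FC(2)] vecs(3,1)] unfolding FC'[symmetric] .
  have gaps: "p \<bullet> ((HL * F * C) *\<^sub>v p) \<le> p \<bullet> (HL *\<^sub>v p)" "q \<bullet> ((HR * C * F) *\<^sub>v q) \<le> q \<bullet> (HR *\<^sub>v q)"
    using quadratic_form_mult_one_minus[OF FC(4) HLc _ vecs(1)] quadratic_form_mult_one_minus[OF FC(5) HRc _ vecs(3)]
      HLc HRc FC(1,2) by (simp_all add: assoc_mult_mat[of _ mL mL _ mR _ mL] assoc_mult_mat[of _ mR mR _ mL _ mR])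
  have "\<tau> \<ge> 0" using tau(1) a(1) by (smt (verit) divide_pos_pos)
  then have "\<tau> / 2 * (p \<bullet> (HL *\<^sub>v p) - p \<bullet> ((HL * F * C) *\<^sub>v p)) \<ge> 0"
    "\<tau> / 2 * (q \<bullet> (HR *\<^sub>v q) - q \<bullet> ((HR * C * F) *\<^sub>v q)) \<ge> 0"
    using gaps by simp_all
  with left right show ?thesis unfolding interface_form_def cross by (simp add: algebra_simps)
qed

section \<open>Single-entry matrices\<close>

lemma dim_interface_mat [simp]:
  "dim_row (E0L n) = n" "dim_col (E0L n) = n" "dim_row (E0R n) = n" "dim_col (E0R n) = n"
  "dim_row (ELR nL nR) = nL" "dim_col (ELR nL nR) = nR" "dim_row (ERL nL nR) = nR" "dim_col (ERL nL nR) = nL"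
  by (simp_all add: E0L_def E0R_def ELR_def ERL_def)

lemma interface_mat_carrier_mat:
  "E0L n \<in> carrier_mat n n" "E0R n \<in> carrier_mat n n"
  "ELR nL nR \<in> carrier_mat nL nR" "ERL nL nR \<in> carrier_mat nR nL"
  by (auto intro: carrier_matI)

lemma transpose_interface_mat [simp]:
  "(E0L n)\<^sup>T = E0L n" "(E0R n)\<^sup>T = E0R n" "(ELR nL nR)\<^sup>T = ERL nL nR" "(ERL nL nR)\<^sup>T = ELR nL nR"
  by (auto simp: E0L_def E0R_def ERL_def intro!: eq_matI)

lemma index_E0L: "i < n \<Longrightarrow> k < n \<Longrightarrow> E0L n $$ (i, k) = of_bool (i = n - 1) * of_bool (k = n - 1)"
  by (simp add: E0L_def)

lemma index_E0R: "i < n \<Longrightarrow> k < n \<Longrightarrow> E0R n $$ (i, k) = of_bool (i = 0) * of_bool (k = 0)"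
  by (simp add: E0R_def)

lemma index_ELR: "i < nL \<Longrightarrow> k < nR \<Longrightarrow> ELR nL nR $$ (i, k) = of_bool (i = nL - 1) * of_bool (k = 0)"
  by (simp add: ELR_def)

lemma index_E0L_mult:
  "S \<in> carrier_mat n n' \<Longrightarrow> i < n \<Longrightarrow> k < n' \<Longrightarrow> (E0L n * S) $$ (i, k) = of_bool (i = n - 1) * S $$ (n - 1, k)"
  by (simp add: E0L_def scalar_prod_def of_bool_def[symmetric] sum.delta')

lemma index_E0R_mult:
  "S \<in> carrier_mat n n' \<Longrightarrow> i < n \<Longrightarrow> k < n' \<Longrightarrow> (E0R n * S) $$ (i, k) = of_bool (i = 0) * S $$ (0, k)"
  by (simp add: E0R_def scalar_prod_def of_bool_def[symmetric] sum.delta')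

lemma index_transpose_mult_ELR:
  "S \<in> carrier_mat nL n' \<Longrightarrow> 0 < nL \<Longrightarrow> i < n' \<Longrightarrow> k < nR \<Longrightarrow>
   (S\<^sup>T * ELR nL nR) $$ (i, k) = S $$ (nL - 1, i) * of_bool (k = 0)"
  by (simp add: ELR_def scalar_prod_def of_bool_def[symmetric] sum.delta')

lemma index_transpose_mult_ERL:
  "S \<in> carrier_mat nR n' \<Longrightarrow> 0 < nR \<Longrightarrow> i < n' \<Longrightarrow> k < nL \<Longrightarrow>
   (S\<^sup>T * ERL nL nR) $$ (i, k) = S $$ (0, i) * of_bool (k = nL - 1)"
  by (simp add: ERL_def ELR_def scalar_prod_def of_bool_def[symmetric] sum.delta')

lemma index_gram_E0L_mult:
  assumes "S \<in> carrier_mat n n'" "0 < n" "i < n'" "k < n'"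
  shows "((E0L n * S)\<^sup>T * (E0L n * S)) $$ (i, k) = S $$ (n - 1, i) * S $$ (n - 1, k)"
proof -
  have "((E0L n * S)\<^sup>T * (E0L n * S)) $$ (i, k) = (\<Sum>t<n. (E0L n * S) $$ (t, i) * (E0L n * S) $$ (t, k))"
    using assms by (simp add: scalar_prod_def atLeast0LessThan)
  also have "\<dots> = (\<Sum>t<n. if t = n - 1 then S $$ (n - 1, i) * S $$ (n - 1, k) else 0)"
    using assms by (intro sum.cong refl) (auto simp del: index_mult_mat simp: index_E0L_mult)
  finally show ?thesis using assms(2) by simp
qed

lemma index_gram_E0R_mult:
  assumes "S \<in> carrier_mat n n'" "0 < n" "i < n'" "k < n'"
  shows "((E0R n * S)\<^sup>T * (E0R n * S)) $$ (i, k) = S $$ (0, i) * S $$ (0, k)"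
proof -
  have "((E0R n * S)\<^sup>T * (E0R n * S)) $$ (i, k) = (\<Sum>t<n. (E0R n * S) $$ (t, i) * (E0R n * S) $$ (t, k))"
    using assms by (simp add: scalar_prod_def atLeast0LessThan)
  also have "\<dots> = (\<Sum>t<n. if t = 0 then S $$ (0, i) * S $$ (0, k) else 0)"
    using assms by (intro sum.cong refl) (auto simp del: index_mult_mat simp: index_E0R_mult)
  finally show ?thesis using assms(2) by simp
qed

lemma quadratic_form_kron_borrowing_E0L:
  assumes "Mt \<in> carrier_mat n n" "M = Mt + \<beta> \<cdot>\<^sub>m ((E0L n * S)\<^sup>T * (E0L n * S))"
    and "S \<in> carrier_mat n n" "H \<in> carrier_mat m m" "u \<in> carrier_vec (n * m)" "0 < n"
  shows "u \<bullet> (kron M H *\<^sub>v u) = u \<bullet> (kron Mt H *\<^sub>v u)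
    + \<beta> * (contract_outer n m (\<lambda>i. S $$ (n - 1, i)) u \<bullet> (H *\<^sub>v contract_outer n m (\<lambda>i. S $$ (n - 1, i)) u))"
proof -
  have "u \<bullet> (kron M H *\<^sub>v u) = 1 * (u \<bullet> (kron Mt H *\<^sub>v u))
      + \<beta> * (u \<bullet> (kron ((E0L n * S)\<^sup>T * (E0L n * S)) H *\<^sub>v u))"
    unfolding assms(2) using assms(1,3-5) by (intro scalar_prod_kron_linear_left) (auto intro!: carrier_matI)
  also have "u \<bullet> (kron ((E0L n * S)\<^sup>T * (E0L n * S)) H *\<^sub>v u) =
      contract_outer n m (\<lambda>i. S $$ (n - 1, i)) u \<bullet> (H *\<^sub>v contract_outer n m (\<lambda>i. S $$ (n - 1, i)) u)"
    using assms(3-6) by (intro scalar_prod_kron_rank_one)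
      (auto intro!: carrier_matI simp del: index_mult_mat(1) simp: index_gram_E0L_mult)
  finally show ?thesis by simp
qed

lemma quadratic_form_kron_borrowing_E0R:
  assumes "Mt \<in> carrier_mat n n" "M = Mt + \<beta> \<cdot>\<^sub>m ((E0R n * S)\<^sup>T * (E0R n * S))"
    and "S \<in> carrier_mat n n" "H \<in> carrier_mat m m" "u \<in> carrier_vec (n * m)" "0 < n"
  shows "u \<bullet> (kron M H *\<^sub>v u) = u \<bullet> (kron Mt H *\<^sub>v u)
    + \<beta> * (contract_outer n m (\<lambda>i. S $$ (0, i)) u \<bullet> (H *\<^sub>v contract_outer n m (\<lambda>i. S $$ (0, i)) u))"
proof -
  have "u \<bullet> (kron M H *\<^sub>v u) = 1 * (u \<bullet> (kron Mt H *\<^sub>v u))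
      + \<beta> * (u \<bullet> (kron ((E0R n * S)\<^sup>T * (E0R n * S)) H *\<^sub>v u))"
    unfolding assms(2) using assms(1,3-5) by (intro scalar_prod_kron_linear_left) (auto intro!: carrier_matI)
  also have "u \<bullet> (kron ((E0R n * S)\<^sup>T * (E0R n * S)) H *\<^sub>v u) =
      contract_outer n m (\<lambda>i. S $$ (0, i)) u \<bullet> (H *\<^sub>v contract_outer n m (\<lambda>i. S $$ (0, i)) u)"
    using assms(3-6) by (intro scalar_prod_kron_rank_one)
      (auto intro!: carrier_matI simp del: index_mult_mat(1) simp: index_gram_E0R_mult)
  finally show ?thesis by simp
qed

section \<open>The energy of the two-block system\<close>

lemma has_real_derivative_scalar_prod_mult_mat_vec:
  fixes x y :: "real \<Rightarrow> real vec"
  assumes x: "\<And>s. x s \<in> carrier_vec n" "x' \<in> carrier_vec n" and y: "\<And>s. y s \<in> carrier_vec m" "y' \<in> carrier_vec m"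
    and K: "K \<in> carrier_mat n m"
    and dx: "\<And>i. i < n \<Longrightarrow> ((\<lambda>s. x s $ i) has_real_derivative x' $ i) (at t)"
    and dy: "\<And>i. i < m \<Longrightarrow> ((\<lambda>s. y s $ i) has_real_derivative y' $ i) (at t)"
  shows "((\<lambda>s. x s \<bullet> (K *\<^sub>v y s)) has_real_derivative x' \<bullet> (K *\<^sub>v y t) + x t \<bullet> (K *\<^sub>v y')) (at t)"
proof -
  have "((\<lambda>s. \<Sum>i<n. \<Sum>k<m. x s $ i * K $$ (i, k) * y s $ k) has_real_derivative
      (\<Sum>i<n. \<Sum>k<m. x' $ i * K $$ (i, k) * y t $ k + x t $ i * K $$ (i, k) * y' $ k)) (at t)"
    using dx dy by (intro DERIV_sum) (auto intro!: derivative_eq_intros)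
  moreover have "(\<lambda>s. x s \<bullet> (K *\<^sub>v y s)) = (\<lambda>s. \<Sum>i<n. \<Sum>k<m. x s $ i * K $$ (i, k) * y s $ k)"
    using x y K by (simp add: scalar_prod_mult_mat_vec_sum)
  moreover have "(\<Sum>i<n. \<Sum>k<m. x' $ i * K $$ (i, k) * y t $ k + x t $ i * K $$ (i, k) * y' $ k) =
      x' \<bullet> (K *\<^sub>v y t) + x t \<bullet> (K *\<^sub>v y')"
    using x y K by (simp add: scalar_prod_mult_mat_vec_sum sum.distrib)
  ultimately show ?thesis by simp
qed

text \<open>Distributivity laws with dimension equations instead of carrier conditions as side conditions,
  so that the simplifier can discharge them.\<close>

lemma mult_mat_vec_add_dims:
  "dim_vec a = dim_col A \<Longrightarrow> dim_vec b = dim_col A \<Longrightarrow> A *\<^sub>v (a + b) = A *\<^sub>v a + A *\<^sub>v (b :: real vec)"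
  by (rule mult_add_distrib_mat_vec[where nr = "dim_row A" and nc = "dim_col A"]) (auto intro: carrier_vecI)

lemma mult_mat_vec_diff_dims:
  "dim_vec a = dim_col A \<Longrightarrow> dim_vec b = dim_col A \<Longrightarrow> A *\<^sub>v (a - b) = A *\<^sub>v a - A *\<^sub>v (b :: real vec)"
  by (rule mult_minus_distrib_mat_vec[where nr = "dim_row A" and nc = "dim_col A"]) (auto intro: carrier_vecI)

lemma mult_mat_vec_smult_dims:
  "dim_vec a = dim_col A \<Longrightarrow> A *\<^sub>v (c \<cdot>\<^sub>v a) = c \<cdot>\<^sub>v (A *\<^sub>v (a :: real vec))"
  by (rule mult_mat_vec[where nr = "dim_row A" and nc = "dim_col A"]) (auto intro: carrier_vecI)

lemma scalar_prod_add_dims: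
  "dim_vec a = dim_vec x \<Longrightarrow> dim_vec b = dim_vec x \<Longrightarrow> x \<bullet> (a + b) = x \<bullet> a + x \<bullet> (b :: real vec)"
  by (rule scalar_prod_add_distrib[where n = "dim_vec x"]) (auto intro: carrier_vecI)

lemma scalar_prod_diff_dims:
  "dim_vec a = dim_vec x \<Longrightarrow> dim_vec b = dim_vec x \<Longrightarrow> x \<bullet> (a - b) = x \<bullet> a - x \<bullet> (b :: real vec)"
  by (rule scalar_prod_minus_distrib[where n = "dim_vec x"]) (auto intro: carrier_vecI)

lemma scalar_prod_smult_dims: "dim_vec a = dim_vec x \<Longrightarrow> x \<bullet> (c \<cdot>\<^sub>v a) = c * (x \<bullet> (a :: real vec))"
  by (rule scalar_prod_smult_right) simp

lemma transpose_mult_dims: "dim_col A = dim_row B \<Longrightarrow> (A * B)\<^sup>T = B\<^sup>T * (A\<^sup>T :: real mat)"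
  by (rule transpose_mult[of _ "dim_row A" "dim_col A" _ "dim_col B"]) (auto intro!: carrier_matI)

locale interface_sbp =
  fixes nxL nyL nxR nyR :: nat and \<tau> :: real
    and HxL HyL HxR HyR MxL MxR SxL SxR IF2C IC2F :: "real mat"
  assumes carrier: "HxL \<in> carrier_mat nxL nxL" "HyL \<in> carrier_mat nyL nyL"
      "HxR \<in> carrier_mat nxR nxR" "HyR \<in> carrier_mat nyR nyR"
      "MxL \<in> carrier_mat nxL nxL" "MxR \<in> carrier_mat nxR nxR"
      "SxL \<in> carrier_mat nxL nxL" "SxR \<in> carrier_mat nxR nxR"
      "IF2C \<in> carrier_mat nyL nyR" "IC2F \<in> carrier_mat nyR nyL"
    and symmetric: "HxL\<^sup>T = HxL" "HyL\<^sup>T = HyL" "HxR\<^sup>T = HxR" "HyR\<^sup>T = HyR" "MxL\<^sup>T = MxL" "MxR\<^sup>T = MxR"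
    and interpolation_adjoint: "HyR * IC2F = (HyL * IF2C)\<^sup>T"
begin

lemma dims [simp]:
  "dim_row HxL = nxL" "dim_col HxL = nxL" "dim_row HyL = nyL" "dim_col HyL = nyL"
  "dim_row HxR = nxR" "dim_col HxR = nxR" "dim_row HyR = nyR" "dim_col HyR = nyR"
  "dim_row MxL = nxL" "dim_col MxL = nxL" "dim_row MxR = nxR" "dim_col MxR = nxR"
  "dim_row SxL = nxL" "dim_col SxL = nxL" "dim_row SxR = nxR" "dim_col SxR = nxR"
  "dim_row IF2C = nyL" "dim_col IF2C = nyR" "dim_row IC2F = nyR" "dim_col IC2F = nyL"
  using carrier by auto

definition energy :: "real vec \<Rightarrow> real vec \<Rightarrow> real vec \<Rightarrow> real vec \<Rightarrow> real" where
  "energy u ut v vt =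
        ut \<bullet> (kron HxL HyL *\<^sub>v ut) + vt \<bullet> (kron HxR HyR *\<^sub>v vt)
      + u \<bullet> (kron MxL HyL *\<^sub>v u) - u \<bullet> (kron (E0L nxL * SxL) HyL *\<^sub>v u)
      + \<tau> * (u \<bullet> (kron (E0L nxL) HyL *\<^sub>v u))
      + v \<bullet> (kron MxR HyR *\<^sub>v v) + v \<bullet> (kron (E0R nxR * SxR) HyR *\<^sub>v v)
      + \<tau> * (v \<bullet> (kron (E0R nxR) HyR *\<^sub>v v))
      + u \<bullet> (kron (SxL\<^sup>T * ELR nxL nxR) (HyL * IF2C) *\<^sub>v v)
      - v \<bullet> (kron (SxR\<^sup>T * ERL nxL nxR) (HyR * IC2F) *\<^sub>v u)
      - 2 * \<tau> * (u \<bullet> (kron (ELR nxL nxR) (HyL * IF2C) *\<^sub>v v))"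

definition energy_rate ::
  "real vec \<Rightarrow> real vec \<Rightarrow> real vec \<Rightarrow> real vec \<Rightarrow> real vec \<Rightarrow> real vec \<Rightarrow> real" where
  "energy_rate u ut utt v vt vtt =
        (utt \<bullet> (kron HxL HyL *\<^sub>v ut) + ut \<bullet> (kron HxL HyL *\<^sub>v utt))
      + (vtt \<bullet> (kron HxR HyR *\<^sub>v vt) + vt \<bullet> (kron HxR HyR *\<^sub>v vtt))
      + (ut \<bullet> (kron MxL HyL *\<^sub>v u) + u \<bullet> (kron MxL HyL *\<^sub>v ut))
      - (ut \<bullet> (kron (E0L nxL * SxL) HyL *\<^sub>v u) + u \<bullet> (kron (E0L nxL * SxL) HyL *\<^sub>v ut))
      + \<tau> * (ut \<bullet> (kron (E0L nxL) HyL *\<^sub>v u) + u \<bullet> (kron (E0L nxL) HyL *\<^sub>v ut))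
      + (vt \<bullet> (kron MxR HyR *\<^sub>v v) + v \<bullet> (kron MxR HyR *\<^sub>v vt))
      + (vt \<bullet> (kron (E0R nxR * SxR) HyR *\<^sub>v v) + v \<bullet> (kron (E0R nxR * SxR) HyR *\<^sub>v vt))
      + \<tau> * (vt \<bullet> (kron (E0R nxR) HyR *\<^sub>v v) + v \<bullet> (kron (E0R nxR) HyR *\<^sub>v vt))
      + (ut \<bullet> (kron (SxL\<^sup>T * ELR nxL nxR) (HyL * IF2C) *\<^sub>v v)
         + u \<bullet> (kron (SxL\<^sup>T * ELR nxL nxR) (HyL * IF2C) *\<^sub>v vt))
      - (vt \<bullet> (kron (SxR\<^sup>T * ERL nxL nxR) (HyR * IC2F) *\<^sub>v u)
         + v \<bullet> (kron (SxR\<^sup>T * ERL nxL nxR) (HyR * IC2F) *\<^sub>v ut))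
      - 2 * \<tau> * (ut \<bullet> (kron (ELR nxL nxR) (HyL * IF2C) *\<^sub>v v)
         + u \<bullet> (kron (ELR nxL nxR) (HyL * IF2C) *\<^sub>v vt))"

definition rhs_u :: "real mat \<Rightarrow> real vec \<Rightarrow> real vec \<Rightarrow> real vec" where
  "rhs_u HxLi u v =
    (let wL = kron (E0L nxL) (1\<^sub>m nyL) *\<^sub>v u - kron (ELR nxL nxR) IF2C *\<^sub>v v;
         HLi = kron HxLi (1\<^sub>m nyL); SL = kron SxL (1\<^sub>m nyL); SR = kron SxR (1\<^sub>m nyR)
     in kron (HxLi * (- MxL + E0L nxL * SxL)) (1\<^sub>m nyL) *\<^sub>v u
        + (1/2) \<cdot>\<^sub>v (HLi *\<^sub>v (SL\<^sup>T *\<^sub>v wL))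
        - \<tau> \<cdot>\<^sub>v (HLi *\<^sub>v wL)
        - (1/2) \<cdot>\<^sub>v (HLi *\<^sub>v (kron (E0L nxL) (1\<^sub>m nyL) *\<^sub>v (SL *\<^sub>v u)
                      - kron (ELR nxL nxR) IF2C *\<^sub>v (SR *\<^sub>v v))))"

definition rhs_v :: "real mat \<Rightarrow> real vec \<Rightarrow> real vec \<Rightarrow> real vec" where
  "rhs_v HxRi u v =
    (let wR = kron (E0R nxR) (1\<^sub>m nyR) *\<^sub>v v - kron (ERL nxL nxR) IC2F *\<^sub>v u;
         HRi = kron HxRi (1\<^sub>m nyR); SL = kron SxL (1\<^sub>m nyL); SR = kron SxR (1\<^sub>m nyR)
     in kron (HxRi * (- MxR - E0R nxR * SxR)) (1\<^sub>m nyR) *\<^sub>v v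
        - (1/2) \<cdot>\<^sub>v (HRi *\<^sub>v (SR\<^sup>T *\<^sub>v wR))
        - \<tau> \<cdot>\<^sub>v (HRi *\<^sub>v wR)
        + (1/2) \<cdot>\<^sub>v (HRi *\<^sub>v (kron (E0R nxR) (1\<^sub>m nyR) *\<^sub>v (SR *\<^sub>v v)
                      - kron (ERL nxL nxR) IC2F *\<^sub>v (SL *\<^sub>v u))))"

lemma energy_has_derivative:
  fixes u ut v vt :: "real \<Rightarrow> real vec"
  assumes vecs: "\<And>s. u s \<in> carrier_vec (nxL * nyL)" "\<And>s. ut s \<in> carrier_vec (nxL * nyL)"
      "utt \<in> carrier_vec (nxL * nyL)"
      "\<And>s. v s \<in> carrier_vec (nxR * nyR)" "\<And>s. vt s \<in> carrier_vec (nxR * nyR)"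
      "vtt \<in> carrier_vec (nxR * nyR)"
    and du: "\<And>i. i < nxL * nyL \<Longrightarrow> ((\<lambda>s. u s $ i) has_real_derivative ut t $ i) (at t)"
      "\<And>i. i < nxL * nyL \<Longrightarrow> ((\<lambda>s. ut s $ i) has_real_derivative utt $ i) (at t)"
    and dv: "\<And>i. i < nxR * nyR \<Longrightarrow> ((\<lambda>s. v s $ i) has_real_derivative vt t $ i) (at t)"
      "\<And>i. i < nxR * nyR \<Longrightarrow> ((\<lambda>s. vt s $ i) has_real_derivative vtt $ i) (at t)"
  shows "((\<lambda>s. energy (u s) (ut s) (v s) (vt s)) has_real_derivative
      energy_rate (u t) (ut t) utt (v t) (vt t) vtt) (at t)"
proof -
  have uu: "((\<lambda>s. u s \<bullet> (K *\<^sub>v u s)) has_real_derivative ut t \<bullet> (K *\<^sub>v u t) + u t \<bullet> (K *\<^sub>v ut t)) (at t)"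
    if "K \<in> carrier_mat (nxL * nyL) (nxL * nyL)" for K
    by (rule has_real_derivative_scalar_prod_mult_mat_vec[OF vecs(1) vecs(2) vecs(1) vecs(2) that du(1) du(1)])
  have uv: "((\<lambda>s. u s \<bullet> (K *\<^sub>v v s)) has_real_derivative ut t \<bullet> (K *\<^sub>v v t) + u t \<bullet> (K *\<^sub>v vt t)) (at t)"
    if "K \<in> carrier_mat (nxL * nyL) (nxR * nyR)" for K
    by (rule has_real_derivative_scalar_prod_mult_mat_vec[OF vecs(1) vecs(2) vecs(4) vecs(5) that du(1) dv(1)])
  have vu: "((\<lambda>s. v s \<bullet> (K *\<^sub>v u s)) has_real_derivative vt t \<bullet> (K *\<^sub>v u t) + v t \<bullet> (K *\<^sub>v ut t)) (at t)"
    if "K \<in> carrier_mat (nxR * nyR) (nxL * nyL)" for K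
    by (rule has_real_derivative_scalar_prod_mult_mat_vec[OF vecs(4) vecs(5) vecs(1) vecs(2) that dv(1) du(1)])
  have vv: "((\<lambda>s. v s \<bullet> (K *\<^sub>v v s)) has_real_derivative vt t \<bullet> (K *\<^sub>v v t) + v t \<bullet> (K *\<^sub>v vt t)) (at t)"
    if "K \<in> carrier_mat (nxR * nyR) (nxR * nyR)" for K
    by (rule has_real_derivative_scalar_prod_mult_mat_vec[OF vecs(4) vecs(5) vecs(4) vecs(5) that dv(1) dv(1)])
  have utut: "((\<lambda>s. ut s \<bullet> (K *\<^sub>v ut s)) has_real_derivative utt \<bullet> (K *\<^sub>v ut t) + ut t \<bullet> (K *\<^sub>v utt)) (at t)"
    if "K \<in> carrier_mat (nxL * nyL) (nxL * nyL)" for K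
    by (rule has_real_derivative_scalar_prod_mult_mat_vec[OF vecs(2) vecs(3) vecs(2) vecs(3) that du(2) du(2)])
  have vtvt: "((\<lambda>s. vt s \<bullet> (K *\<^sub>v vt s)) has_real_derivative vtt \<bullet> (K *\<^sub>v vt t) + vt t \<bullet> (K *\<^sub>v vtt)) (at t)"
    if "K \<in> carrier_mat (nxR * nyR) (nxR * nyR)" for K
    by (rule has_real_derivative_scalar_prod_mult_mat_vec[OF vecs(5) vecs(6) vecs(5) vecs(6) that dv(2) dv(2)])
  show ?thesis
    unfolding energy_def energy_rate_def
    by (intro DERIV_add DERIV_diff DERIV_cmult uu uv vu vv utut vtvt carrier_matI) simp_all
qed

lemma energy_rate_rhs_eq_0:
  assumes HxLi: "HxLi \<in> carrier_mat nxL nxL" "HxL * HxLi = 1\<^sub>m nxL"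
    and HxRi: "HxRi \<in> carrier_mat nxR nxR" "HxR * HxRi = 1\<^sub>m nxR"
    and vecs: "u \<in> carrier_vec (nxL * nyL)" "ut \<in> carrier_vec (nxL * nyL)"
      "v \<in> carrier_vec (nxR * nyR)" "vt \<in> carrier_vec (nxR * nyR)"
  shows "energy_rate u ut (rhs_u HxLi u v) v vt (rhs_v HxRi u v) = 0"
proof -
  have [simp]: "dim_row HxLi = nxL" "dim_col HxLi = nxL" "dim_row HxRi = nxR" "dim_col HxRi = nxR"
    "dim_vec u = nxL * nyL" "dim_vec ut = nxL * nyL" "dim_vec v = nxR * nyR" "dim_vec vt = nxR * nyR"
    using HxLi HxRi vecs by auto
  have invL: "HxL * (HxLi * Z) = Z" if "dim_row Z = nxL" for Z
  proof -
    have "Z \<in> carrier_mat nxL (dim_col Z)" using that by (auto intro!: carrier_matI)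
    then show ?thesis using assoc_mult_mat[OF carrier(1) HxLi(1), of Z] HxLi(2) by simp
  qed
  have invR: "HxR * (HxRi * Z) = Z" if "dim_row Z = nxR" for Z
  proof -
    have "Z \<in> carrier_mat nxR (dim_col Z)" using that by (auto intro!: carrier_matI)
    then show ?thesis using assoc_mult_mat[OF carrier(3) HxRi(1), of Z] HxRi(2) by simp
  qed
  have adjoint: "(HyR * IC2F)\<^sup>T = HyL * IF2C" using interpolation_adjoint by simp
  have symL: "x \<bullet> (kron HxL HyL *\<^sub>v ut) = ut \<bullet> (kron HxL HyL *\<^sub>v x)" if "dim_vec x = nxL * nyL" for x
    using that scalar_prod_kron_swap[of x HxL HyL ut] symmetric by simp
  have symR: "x \<bullet> (kron HxR HyR *\<^sub>v vt) = vt \<bullet> (kron HxR HyR *\<^sub>v x)" if "dim_vec x = nxR * nyR" for x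
    using that scalar_prod_kron_swap[of x HxR HyR vt] symmetric by simp
  have split_L: "ut \<bullet> (kron (- MxL + E0L nxL * SxL) HyL *\<^sub>v u)
      = (-1) * (ut \<bullet> (kron MxL HyL *\<^sub>v u)) + 1 * (ut \<bullet> (kron (E0L nxL * SxL) HyL *\<^sub>v u))"
    by (rule scalar_prod_kron_linear_left[OF _ _ _ carrier(5) mult_carrier_mat[OF interface_mat_carrier_mat(1) carrier(7)]])
      (use carrier(5) in auto)
  have split_R: "vt \<bullet> (kron (- MxR - E0R nxR * SxR) HyR *\<^sub>v v)
      = (-1) * (vt \<bullet> (kron MxR HyR *\<^sub>v v)) + (-1) * (vt \<bullet> (kron (E0R nxR * SxR) HyR *\<^sub>v v))"
    by (rule scalar_prod_kron_linear_left[OF _ _ _ carrier(6) mult_carrier_mat[OF interface_mat_carrier_mat(2) carrier(8)]])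
      (use carrier(6) in auto)
  have dims_rhs: "dim_vec (rhs_u HxLi u v) = nxL * nyL" "dim_vec (rhs_v HxRi u v) = nxR * nyR"
    by (simp_all add: rhs_u_def rhs_v_def Let_def)
  show ?thesis
    unfolding energy_rate_def symL[OF dims_rhs(1)] symR[OF dims_rhs(2)]
    unfolding rhs_u_def rhs_v_def Let_def
    apply (simp add: mult_mat_vec_add_dims mult_mat_vec_diff_dims mult_mat_vec_smult_dims scalar_prod_add_dims
        scalar_prod_diff_dims scalar_prod_smult_dims kron_mult_vec_assoc transpose_kron transpose_mult_dims
        invL invR HxLi(2) HxRi(2) symmetric interpolation_adjoint adjoint
        scalar_prod_kron_swap[of u] scalar_prod_kron_swap[of v])
    apply (simp only: split_L split_R)
    apply (simp add: algebra_simps diff_divide_distrib)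
    done
qed

lemma energy_conserved:
  fixes u u' u'' v v' v'' :: "real \<Rightarrow> real vec"
  assumes HxLi: "HxLi \<in> carrier_mat nxL nxL" "HxL * HxLi = 1\<^sub>m nxL"
    and HxRi: "HxRi \<in> carrier_mat nxR nxR" "HxR * HxRi = 1\<^sub>m nxR"
    and vecs: "\<And>s. u s \<in> carrier_vec (nxL * nyL)" "\<And>s. u' s \<in> carrier_vec (nxL * nyL)"
      "\<And>s. u'' s \<in> carrier_vec (nxL * nyL)" "\<And>s. v s \<in> carrier_vec (nxR * nyR)"
      "\<And>s. v' s \<in> carrier_vec (nxR * nyR)" "\<And>s. v'' s \<in> carrier_vec (nxR * nyR)"
    and du: "\<And>i. i < nxL * nyL \<Longrightarrow> ((\<lambda>s. u s $ i) has_real_derivative u' t $ i) (at t)"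
      "\<And>i. i < nxL * nyL \<Longrightarrow> ((\<lambda>s. u' s $ i) has_real_derivative u'' t $ i) (at t)"
    and dv: "\<And>i. i < nxR * nyR \<Longrightarrow> ((\<lambda>s. v s $ i) has_real_derivative v' t $ i) (at t)"
      "\<And>i. i < nxR * nyR \<Longrightarrow> ((\<lambda>s. v' s $ i) has_real_derivative v'' t $ i) (at t)"
    and ode: "u'' t = rhs_u HxLi (u t) (v t)" "v'' t = rhs_v HxRi (u t) (v t)"
  shows "((\<lambda>s. energy (u s) (u' s) (v s) (v' s)) has_real_derivative 0) (at t)"
proof -
  have "((\<lambda>s. energy (u s) (u' s) (v s) (v' s)) has_real_derivative
      energy_rate (u t) (u' t) (u'' t) (v t) (v' t) (v'' t)) (at t)"
    by (rule energy_has_derivative[OF vecs(1,2,3) vecs(4,5,6) du dv])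
  moreover have "energy_rate (u t) (u' t) (u'' t) (v t) (v' t) (v'' t) = 0"
    unfolding ode by (rule energy_rate_rhs_eq_0[OF HxLi HxRi vecs(1,2,4,5)])
  ultimately show ?thesis by simp
qed

lemma energy_eq_interface_form:
  assumes n: "0 < nxL" "0 < nxR"
    and decomp_L: "MtL \<in> carrier_mat nxL nxL" "MxL = MtL + \<beta>L \<cdot>\<^sub>m ((E0L nxL * SxL)\<^sup>T * (E0L nxL * SxL))"
    and decomp_R: "MtR \<in> carrier_mat nxR nxR" "MxR = MtR + \<beta>R \<cdot>\<^sub>m ((E0R nxR * SxR)\<^sup>T * (E0R nxR * SxR))"
    and vecs: "u \<in> carrier_vec (nxL * nyL)" "v \<in> carrier_vec (nxR * nyR)"
  defines "p \<equiv> contract_outer nxL nyL (\<lambda>i. of_bool (i = nxL - 1)) u"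
    and "d \<equiv> contract_outer nxL nyL (\<lambda>i. SxL $$ (nxL - 1, i)) u"
    and "q \<equiv> contract_outer nxR nyR (\<lambda>i. of_bool (i = 0)) v"
    and "e \<equiv> contract_outer nxR nyR (\<lambda>i. SxR $$ (0, i)) v"
  shows "energy u ut v vt = ut \<bullet> (kron HxL HyL *\<^sub>v ut) + vt \<bullet> (kron HxR HyR *\<^sub>v vt)
      + u \<bullet> (kron MtL HyL *\<^sub>v u) + v \<bullet> (kron MtR HyR *\<^sub>v v)
      + interface_form HyL HyR IF2C IC2F \<beta>L \<beta>R \<tau> p d q e"
proof -
  note rank_one_u = scalar_prod_kron_rank_one[OF _ carrier(2) vecs(1) vecs(1)]
    and rank_one_v = scalar_prod_kron_rank_one[OF _ carrier(4) vecs(2) vecs(2)]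
    and rank_one_uv = scalar_prod_kron_rank_one[OF _ mult_carrier_mat[OF carrier(2,9)] vecs(1,2)]
    and rank_one_vu = scalar_prod_kron_rank_one[OF _ mult_carrier_mat[OF carrier(4,10)] vecs(2,1)]
  have uMu: "u \<bullet> (kron MxL HyL *\<^sub>v u) = u \<bullet> (kron MtL HyL *\<^sub>v u) + \<beta>L * (d \<bullet> (HyL *\<^sub>v d))"
    unfolding d_def by (rule quadratic_form_kron_borrowing_E0L[OF decomp_L carrier(7,2) vecs(1) n(1)])
  have vMv: "v \<bullet> (kron MxR HyR *\<^sub>v v) = v \<bullet> (kron MtR HyR *\<^sub>v v) + \<beta>R * (e \<bullet> (HyR *\<^sub>v e))"
    unfolding e_def by (rule quadratic_form_kron_borrowing_E0R[OF decomp_R carrier(8,4) vecs(2) n(2)])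
  have "u \<bullet> (kron (E0L nxL * SxL) HyL *\<^sub>v u) = p \<bullet> (HyL *\<^sub>v d)"
    unfolding p_def d_def
    by (intro rank_one_u)
      (auto intro!: carrier_matI simp del: index_mult_mat(1) simp: index_E0L_mult[OF carrier(7)])
  moreover have "u \<bullet> (kron (E0L nxL) HyL *\<^sub>v u) = p \<bullet> (HyL *\<^sub>v p)"
    unfolding p_def by (intro rank_one_u) (auto simp: index_E0L interface_mat_carrier_mat)
  moreover have "u \<bullet> (kron (SxL\<^sup>T * ELR nxL nxR) (HyL * IF2C) *\<^sub>v v) = d \<bullet> ((HyL * IF2C) *\<^sub>v q)"
    unfolding d_def q_def using n(1)
    by (intro rank_one_uv) (auto intro!: carrier_matI simp del: index_mult_mat(1)
        simp: index_transpose_mult_ELR[OF carrier(7)])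
  moreover have "u \<bullet> (kron (ELR nxL nxR) (HyL * IF2C) *\<^sub>v v) = p \<bullet> ((HyL * IF2C) *\<^sub>v q)"
    unfolding p_def q_def by (intro rank_one_uv) (auto simp: index_ELR interface_mat_carrier_mat)
  moreover have "v \<bullet> (kron (E0R nxR * SxR) HyR *\<^sub>v v) = q \<bullet> (HyR *\<^sub>v e)"
    unfolding q_def e_def
    by (intro rank_one_v)
      (auto intro!: carrier_matI simp del: index_mult_mat(1) simp: index_E0R_mult[OF carrier(8)])
  moreover have "v \<bullet> (kron (E0R nxR) HyR *\<^sub>v v) = q \<bullet> (HyR *\<^sub>v q)"
    unfolding q_def by (intro rank_one_v) (auto simp: index_E0R interface_mat_carrier_mat)
  moreover have "v \<bullet> (kron (SxR\<^sup>T * ERL nxL nxR) (HyR * IC2F) *\<^sub>v u) = e \<bullet> ((HyR * IC2F) *\<^sub>v p)"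
    unfolding e_def p_def using n(2)
    by (intro rank_one_vu) (auto intro!: carrier_matI simp del: index_mult_mat(1)
        simp: index_transpose_mult_ERL[OF carrier(8)])
  ultimately show ?thesis
    unfolding energy_def interface_form_def uMu vMv by simp
qed

lemma energy_nonneg:
  assumes n: "0 < nxL" "0 < nxR"
    and H: "psd_mat nxL HxL" "psd_mat nxR HxR" "psd_mat nyL HyL" "psd_mat nyR HyR"
      "diagonal_mat HyL" "diagonal_mat HyR"
    and decomp_L: "psd_mat nxL MtL" "MxL = MtL + \<beta>L \<cdot>\<^sub>m ((E0L nxL * SxL)\<^sup>T * (E0L nxL * SxL))"
    and decomp_R: "psd_mat nxR MtR" "MxR = MtR + \<beta>R \<cdot>\<^sub>m ((E0R nxR * SxR)\<^sup>T * (E0R nxR * SxR))"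
    and \<beta>: "\<beta>L > 0" "\<beta>R > 0" and tau: "\<tau> \<ge> 1 / (2 * \<beta>L)" "\<tau> \<ge> 1 / (2 * \<beta>R)"
    and interpolation: "psd_mat nyL (HyL * (1\<^sub>m nyL - IF2C * IC2F))" "psd_mat nyR (HyR * (1\<^sub>m nyR - IC2F * IF2C))"
    and vecs: "u \<in> carrier_vec (nxL * nyL)" "ut \<in> carrier_vec (nxL * nyL)"
      "v \<in> carrier_vec (nxR * nyR)" "vt \<in> carrier_vec (nxR * nyR)"
  shows "energy u ut v vt \<ge> 0"
proof -
  have Mt: "MtL \<in> carrier_mat nxL nxL" "MtR \<in> carrier_mat nxR nxR"
    using decomp_L(1) decomp_R(1) by (simp_all add: psd_mat_def)
  have "ut \<bullet> (kron HxL HyL *\<^sub>v ut) \<ge> 0" "vt \<bullet> (kron HxR HyR *\<^sub>v vt) \<ge> 0"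
    "u \<bullet> (kron MtL HyL *\<^sub>v u) \<ge> 0" "v \<bullet> (kron MtR HyR *\<^sub>v v) \<ge> 0"
    using psd_mat_kron_diagonal[OF H(1) H(3,5)] psd_mat_kron_diagonal[OF H(2) H(4,6)]
      psd_mat_kron_diagonal[OF decomp_L(1) H(3,5)] psd_mat_kron_diagonal[OF decomp_R(1) H(4,6)] vecs
    by (simp_all add: psd_mat_def)
  moreover have "interface_form HyL HyR IF2C IC2F \<beta>L \<beta>R \<tau>
      (contract_outer nxL nyL (\<lambda>i. of_bool (i = nxL - 1)) u) (contract_outer nxL nyL (\<lambda>i. SxL $$ (nxL - 1, i)) u)
      (contract_outer nxR nyR (\<lambda>i. of_bool (i = 0)) v) (contract_outer nxR nyR (\<lambda>i. SxR $$ (0, i)) v) \<ge> 0"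
    by (rule interface_form_nonneg[OF H(3) symmetric(2) H(4) symmetric(4) carrier(9,10) interpolation_adjoint
          interpolation _ _ _ _ \<beta> tau]) simp_all
  ultimately show ?thesis
    unfolding energy_eq_interface_form[OF n Mt(1) decomp_L(2) Mt(2) decomp_R(2) vecs(1,3)] by linarith
qed

end

theorem mainTheorem3:
  fixes nxL nyL nxR nyR :: nat
    and hxL hxR \<alpha> \<tau> :: real
    and HxL HyL HxR HyR HxLi HxRi MxL MxR MtL MtR SxL SxR IF2C IC2F :: "real mat"
  assumes n: "nxL \<ge> 2" "nyL \<ge> 2" "nxR \<ge> 2" "nyR \<ge> 2"
    and h: "hxL > 0" "hxR > 0"
    (* (i) *)
    and HxL: "diagonal_mat HxL" "pd_mat nxL HxL"
    and HyL: "diagonal_mat HyL" "pd_mat nyL HyL"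
    and HxR: "diagonal_mat HxR" "pd_mat nxR HxR"
    and HyR: "diagonal_mat HyR" "pd_mat nyR HyR"
    and HxLi: "HxLi \<in> carrier_mat nxL nxL" "HxL * HxLi = 1\<^sub>m nxL" "HxLi * HxL = 1\<^sub>m nxL"
    and HxRi: "HxRi \<in> carrier_mat nxR nxR" "HxR * HxRi = 1\<^sub>m nxR" "HxRi * HxR = 1\<^sub>m nxR"
    (* (ii) *)
    and S: "SxL \<in> carrier_mat nxL nxL" "SxR \<in> carrier_mat nxR nxR"
    and alpha: "\<alpha> > 0"
    and Mleft: "MxL \<in> carrier_mat nxL nxL" "symmetric_mat MxL"
        "symmetric_mat MtL" "psd_mat nxL MtL"
        "MxL = MtL + (hxL * \<alpha>) \<cdot>\<^sub>m ((E0L nxL * SxL)\<^sup>T * (E0L nxL * SxL))"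
    and Mright: "MxR \<in> carrier_mat nxR nxR" "symmetric_mat MxR"
        "symmetric_mat MtR" "psd_mat nxR MtR"
        "MxR = MtR + (hxR * \<alpha>) \<cdot>\<^sub>m ((E0R nxR * SxR)\<^sup>T * (E0R nxR * SxR))"
    (* (iii) *)
    and I: "IF2C \<in> carrier_mat nyL nyR" "IC2F \<in> carrier_mat nyR nyL"
        "HyR * IC2F = (HyL * IF2C)\<^sup>T"
        "psd_mat nyL (HyL * (1\<^sub>m nyL - IF2C * IC2F))"
        "psd_mat nyR (HyR * (1\<^sub>m nyR - IC2F * IF2C))"
    (* (iv) *)
    and tau: "\<tau> \<ge> max (1 / (2 * \<alpha> * hxL)) (1 / (2 * \<alpha> * hxR))"
  defines "En \<equiv> (\<lambda>u ut v vt.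
        ut \<bullet> (kron HxL HyL *\<^sub>v ut) + vt \<bullet> (kron HxR HyR *\<^sub>v vt)
      + u \<bullet> (kron MxL HyL *\<^sub>v u) - u \<bullet> (kron (E0L nxL * SxL) HyL *\<^sub>v u)
      + \<tau> * (u \<bullet> (kron (E0L nxL) HyL *\<^sub>v u))
      + v \<bullet> (kron MxR HyR *\<^sub>v v) + v \<bullet> (kron (E0R nxR * SxR) HyR *\<^sub>v v)
      + \<tau> * (v \<bullet> (kron (E0R nxR) HyR *\<^sub>v v))
      + u \<bullet> (kron (SxL\<^sup>T * ELR nxL nxR) (HyL * IF2C) *\<^sub>v v)
      - v \<bullet> (kron (SxR\<^sup>T * ERL nxL nxR) (HyR * IC2F) *\<^sub>v u)
      - 2 * \<tau> * (u \<bullet> (kron (ELR nxL nxR) (HyL * IF2C) *\<^sub>v v)))"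
  shows "(\<forall>u ut v vt. u \<in> carrier_vec (nxL * nyL) \<longrightarrow> ut \<in> carrier_vec (nxL * nyL)
            \<longrightarrow> v \<in> carrier_vec (nxR * nyR) \<longrightarrow> vt \<in> carrier_vec (nxR * nyR)
            \<longrightarrow> En u ut v vt \<ge> 0)
    \<and> (\<forall>(u :: real \<Rightarrow> real vec) u' u'' (v :: real \<Rightarrow> real vec) v' v''.
          (\<forall>t. u t \<in> carrier_vec (nxL * nyL) \<and> u' t \<in> carrier_vec (nxL * nyL)
               \<and> u'' t \<in> carrier_vec (nxL * nyL)
               \<and> v t \<in> carrier_vec (nxR * nyR) \<and> v' t \<in> carrier_vec (nxR * nyR)
               \<and> v'' t \<in> carrier_vec (nxR * nyR)) \<longrightarrow>
          (\<forall>t. \<forall>i < nxL * nyL. ((\<lambda>s. u s $ i) has_real_derivative (u' t $ i)) (at t)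
                            \<and> ((\<lambda>s. u' s $ i) has_real_derivative (u'' t $ i)) (at t)) \<longrightarrow>
          (\<forall>t. \<forall>i < nxR * nyR. ((\<lambda>s. v s $ i) has_real_derivative (v' t $ i)) (at t)
                            \<and> ((\<lambda>s. v' s $ i) has_real_derivative (v'' t $ i)) (at t)) \<longrightarrow>
          (\<forall>t. let wL = kron (E0L nxL) (1\<^sub>m nyL) *\<^sub>v u t - kron (ELR nxL nxR) IF2C *\<^sub>v v t;
                   wR = kron (E0R nxR) (1\<^sub>m nyR) *\<^sub>v v t - kron (ERL nxL nxR) IC2F *\<^sub>v u t;
                   HLi = kron HxLi (1\<^sub>m nyL); HRi = kron HxRi (1\<^sub>m nyR);
                   SL = kron SxL (1\<^sub>m nyL); SR = kron SxR (1\<^sub>m nyR)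
               in u'' t = kron (HxLi * (- MxL + E0L nxL * SxL)) (1\<^sub>m nyL) *\<^sub>v u t
                          + (1/2) \<cdot>\<^sub>v (HLi *\<^sub>v (SL\<^sup>T *\<^sub>v wL))
                          - \<tau> \<cdot>\<^sub>v (HLi *\<^sub>v wL)
                          - (1/2) \<cdot>\<^sub>v (HLi *\<^sub>v (kron (E0L nxL) (1\<^sub>m nyL) *\<^sub>v (SL *\<^sub>v u t)
                                        - kron (ELR nxL nxR) IF2C *\<^sub>v (SR *\<^sub>v v t)))
                \<and> v'' t = kron (HxRi * (- MxR - E0R nxR * SxR)) (1\<^sub>m nyR) *\<^sub>v v t
                          - (1/2) \<cdot>\<^sub>v (HRi *\<^sub>v (SR\<^sup>T *\<^sub>v wR))
                          - \<tau> \<cdot>\<^sub>v (HRi *\<^sub>v wR)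
                          + (1/2) \<cdot>\<^sub>v (HRi *\<^sub>v (kron (E0R nxR) (1\<^sub>m nyR) *\<^sub>v (SR *\<^sub>v v t)
                                        - kron (ERL nxL nxR) IC2F *\<^sub>v (SL *\<^sub>v u t)))) \<longrightarrow>
          (\<forall>t. ((\<lambda>s. En (u s) (u' s) (v s) (v' s)) has_real_derivative 0) (at t)))"
proof -
  have carrier: "HxL \<in> carrier_mat nxL nxL" "HyL \<in> carrier_mat nyL nyL"
      "HxR \<in> carrier_mat nxR nxR" "HyR \<in> carrier_mat nyR nyR"
    using HxL(2) HyL(2) HxR(2) HyR(2) by (simp_all add: pd_mat_def)
  interpret interface_sbp nxL nyL nxR nyR \<tau> HxL HyL HxR HyR MxL MxR SxL SxR IF2C IC2F
    using carrier Mleft(1,2) Mright(1,2) S I(1-3)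
      diagonal_mat_transpose[OF HxL(1) carrier(1)] diagonal_mat_transpose[OF HyL(1) carrier(2)]
      diagonal_mat_transpose[OF HxR(1) carrier(3)] diagonal_mat_transpose[OF HyR(1) carrier(4)]
    by unfold_locales (simp_all add: symmetric_mat_def)
  have En: "En = energy" by (simp add: En_def energy_def fun_eq_iff)
  have n: "0 < nxL" "0 < nxR" using n by simp_all
  have tau': "\<tau> \<ge> 1 / (2 * (hxL * \<alpha>))" "\<tau> \<ge> 1 / (2 * (hxR * \<alpha>))"
    using tau by (simp_all add: mult_ac)
  show ?thesis
    unfolding En
  proof (intro conjI allI impI, goal_cases)
    case (1 u ut v vt)
    then show ?case
      using h alpha
      by (intro energy_nonneg[OF n pd_mat_imp_psd_mat[OF HxL(2)] pd_mat_imp_psd_mat[OF HxR(2)]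
            pd_mat_imp_psd_mat[OF HyL(2)] pd_mat_imp_psd_mat[OF HyR(2)] HyL(1) HyR(1)
            Mleft(4,5) Mright(4,5) _ _ tau' I(4,5)]) simp_all
  next
    case (2 u u' u'' v v' v'' t)
    have ode: "u'' t = rhs_u HxLi (u t) (v t)" "v'' t = rhs_v HxRi (u t) (v t)"
      using 2(4)[rule_format, of t] by (simp_all add: rhs_u_def rhs_v_def Let_def)
    show ?case
      using 2(1-3)
      by (intro energy_conserved[where u = u and u'' = u'' and v = v and v'' = v'' and t = t,
            OF HxLi(1,2) HxRi(1,2) _ _ _ _ _ _ _ _ _ _ ode]) auto
  qed
qed

end
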